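(* Let $(W,S)$ be a right-angled Coxeter system, $G$ a subgroup of $\mathrm{Aut}(W,S)$, $I\subset S$, and $\{g_i\}_{i\in I}$ a family of involutions in $G$ such that: (i) $g_i(s)\in S$ for all $i\in I$, $s\in S$; (ii) for all $i,j\in I$ with $ij=ji$, either [$g_i(j)\in I$, $g_j(i)=i$ and $g_{g_i(j)}=g_ig_jg_i$] or [$g_j(i)\in I$, $g_i(j)=j$ and $g_{g_j(i)}=g_jg_ig_j$]; (iii) $g_i(i)=i$ for all $i\in I$. Let $H$ be the subgroup of $W\rtimes G$ generated by $\{ig_i\}_{i\in I}$, and let $L$ be the group generated by symbols $l_i$, $i\in I$, subject to the relations $l_i^2=1$ for all $i\in I$, and $l_il_j=l_{g_i(j)}l_i$ whenever $ij=ji$, $g_j(i)=i$, $g_i(j)\in I$ and $g_{g_i(j)}=g_ig_jg_i$. Then the map $\varphi:L\to H$, $l_i\mapsto ig_i$, is a well-defined group isomorphism.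
   Context: A right-angled Coxeter system is a Coxeter system whose Coxeter matrix has all off-diagonal entries in $\{2,\infty\}$. $\mathrm{Aut}(W,S)$ denotes the group of automorphisms of $W$ that map $S$ bijectively onto $S$. $W\rtimes G$ is the semidirect product with multiplication $(x,\alpha)(y,\beta)=(x\alpha(y),\alpha\beta)$, and $ig_i$ denotes the element $(i,g_i)$. *)

theory Defs
  imports "HOL-Algebra.Algebra"
begin

inductive_set pres_eq :: "'a set \<Rightarrow> ('a list \<times> 'a list) set \<Rightarrow> ('a list \<times> 'a list) set"
  for Xs :: "'a set" and Rs :: "('a list \<times> 'a list) set" where
  pe_refl: "w \<in> lists Xs \<Longrightarrow> (w, w) \<in> pres_eq Xs Rs"
| pe_sym: "(u, v) \<in> pres_eq Xs Rs \<Longrightarrow> (v, u) \<in> pres_eq Xs Rs"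
| pe_trans: "(u, v) \<in> pres_eq Xs Rs \<Longrightarrow> (v, w) \<in> pres_eq Xs Rs \<Longrightarrow> (u, w) \<in> pres_eq Xs Rs"
| pe_inv: "u \<in> lists Xs \<Longrightarrow> v \<in> lists Xs \<Longrightarrow> x \<in> Xs \<Longrightarrow> (u @ [x, x] @ v, u @ v) \<in> pres_eq Xs Rs"
| pe_rel: "u \<in> lists Xs \<Longrightarrow> v \<in> lists Xs \<Longrightarrow> (a, b) \<in> Rs \<Longrightarrow> a \<in> lists Xs \<Longrightarrow> b \<in> lists Xs
           \<Longrightarrow> (u @ a @ v, u @ b @ v) \<in> pres_eq Xs Rs"

definition pres_group :: "'a set \<Rightarrow> ('a list \<times> 'a list) set \<Rightarrow> 'a list set monoid" where
  "pres_group Xs Rs =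
     \<lparr>carrier = lists Xs // pres_eq Xs Rs,
      monoid.mult = (\<lambda>A B. \<Union>a\<in>A. \<Union>b\<in>B. pres_eq Xs Rs `` {a @ b}),
      one = pres_eq Xs Rs `` {[]}\<rparr>"

definition pres_gen :: "'a set \<Rightarrow> ('a list \<times> 'a list) set \<Rightarrow> 'a \<Rightarrow> 'a list set" where
  "pres_gen Xs Rs x = pres_eq Xs Rs `` {[x]}"

text \<open>Right-angled Coxeter system with vertex set V and commutation relation E:
  W = \<open>\<langle>V | s^2 = 1, (st)^2 = 1 if E s t\<rangle>\<close> (m(s,t)=2 iff E s t, otherwise \<infinity>).\<close>

definition racg_rel :: "'v set \<Rightarrow> ('v \<Rightarrow> 'v \<Rightarrow> bool) \<Rightarrow> ('v list \<times> 'v list) set" where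
  "racg_rel V E = {([s, t], [t, s]) | s t. s \<in> V \<and> t \<in> V \<and> E s t}"

definition racg :: "'v set \<Rightarrow> ('v \<Rightarrow> 'v \<Rightarrow> bool) \<Rightarrow> 'v list set monoid" where
  "racg V E = pres_group V (racg_rel V E)"

definition racg_S :: "'v set \<Rightarrow> ('v \<Rightarrow> 'v \<Rightarrow> bool) \<Rightarrow> 'v list set set" where
  "racg_S V E = pres_gen V (racg_rel V E) ` V"

definition AutS :: "('w, 'b) monoid_scheme \<Rightarrow> 'w set \<Rightarrow> ('w \<Rightarrow> 'w) monoid" where
  "AutS W S =
     \<lparr>carrier = {h. h \<in> iso W W \<and> bij_betw h S S \<and> h \<in> extensional (carrier W)},
      monoid.mult = (\<lambda>f h. compose (carrier W) f h),
      one = restrict id (carrier W)\<rparr>"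

definition sdprod :: "('w, 'b) monoid_scheme \<Rightarrow> ('w \<Rightarrow> 'w, 'c) monoid_scheme
                      \<Rightarrow> ('w \<times> ('w \<Rightarrow> 'w)) monoid" where
  "sdprod W G =
     \<lparr>carrier = carrier W \<times> carrier G,
      monoid.mult = (\<lambda>(x, a) (y, b). (x \<otimes>\<^bsub>W\<^esub> a y, a \<otimes>\<^bsub>G\<^esub> b)),
      one = (\<one>\<^bsub>W\<^esub>, \<one>\<^bsub>G\<^esub>)\<rparr>"

definition L_rel :: "('w, 'b) monoid_scheme \<Rightarrow> ('w \<Rightarrow> 'w, 'c) monoid_scheme \<Rightarrow> 'w set
                     \<Rightarrow> ('w \<Rightarrow> ('w \<Rightarrow> 'w)) \<Rightarrow> ('w list \<times> 'w list) set" where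
  "L_rel W G I g = {([i, j], [g i j, i]) | i j. i \<in> I \<and> j \<in> I \<and> i \<otimes>\<^bsub>W\<^esub> j = j \<otimes>\<^bsub>W\<^esub> i \<and>
                  g j i = i \<and> g i j \<in> I \<and> g (g i j) = g i \<otimes>\<^bsub>G\<^esub> g j \<otimes>\<^bsub>G\<^esub> g i}"

definition H_grp :: "('w, 'b) monoid_scheme \<Rightarrow> ('w \<Rightarrow> 'w, 'c) monoid_scheme \<Rightarrow> 'w set
                     \<Rightarrow> ('w \<Rightarrow> ('w \<Rightarrow> 'w)) \<Rightarrow> ('w \<times> ('w \<Rightarrow> 'w)) monoid" where
  "H_grp W G I g = (sdprod W G)\<lparr>carrier := generate (sdprod W G) {(i, g i) | i. i \<in> I}\<rparr>"

end

theory Submission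
  imports Defs
begin

text \<open>The exchange hypothesis (ii) makes \<open>l\<^sub>i \<mapsto> (i, g\<^sub>i)\<close> respect the relations of \<open>L\<close>,
  so it induces a surjective homomorphism onto \<open>H\<close>. For injectivity, note that the
  \<open>W\<close>-component of \<open>(i\<^sub>1, g\<^sub>i\<^sub>1)\<cdots>(i\<^sub>n, g\<^sub>i\<^sub>n)\<close> is the product of the
  generators \<open>s\<^sub>k = g\<^sub>i\<^sub>1\<cdots>g\<^sub>i\<^sub>k\<^sub>-\<^sub>1(i\<^sub>k) \<in> S\<close>. In a right-angled Coxeter group a
  word is trivial iff it can be erased by swapping adjacent commuting letters and deleting
  pairs \<open>a m a\<close> with every letter of \<open>m\<close> commuting with \<open>a\<close> (these moves are confluent
  up to swaps, so erasability is invariant under the defining relations). Each such move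
  on \<open>s\<^sub>1\<cdots>s\<^sub>n\<close> lifts, again by (ii), to a relation of \<open>L\<close> applied to
  \<open>i\<^sub>1\<cdots>i\<^sub>n\<close>; hence a word of \<open>L\<close> mapped to \<open>1\<close> is trivial.\<close>

section \<open>Words modulo a commutation relation\<close>

inductive comm_swap :: "('a \<Rightarrow> 'a \<Rightarrow> bool) \<Rightarrow> 'a list \<Rightarrow> 'a list \<Rightarrow> bool" for C where
  comm_swapI: "C s t \<Longrightarrow> comm_swap C (u @ s # t # v) (u @ t # s # v)"

inductive comm_cancel :: "('a \<Rightarrow> 'a \<Rightarrow> bool) \<Rightarrow> 'a list \<Rightarrow> 'a list \<Rightarrow> bool" for C where
  comm_cancelI: "\<forall>c\<in>set m. C a c \<Longrightarrow> comm_cancel C (u @ a # m @ a # v) (u @ m @ v)"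

definition comm_step :: "('a \<Rightarrow> 'a \<Rightarrow> bool) \<Rightarrow> 'a list \<Rightarrow> 'a list \<Rightarrow> bool" where
  "comm_step C x y \<longleftrightarrow> comm_swap C x y \<or> comm_cancel C x y"

definition comm_trivial :: "('a \<Rightarrow> 'a \<Rightarrow> bool) \<Rightarrow> 'a list \<Rightarrow> bool" where
  "comm_trivial C w \<longleftrightarrow> (comm_step C)\<^sup>*\<^sup>* w []"

definition comm_joinable :: "('a \<Rightarrow> 'a \<Rightarrow> bool) \<Rightarrow> 'a list \<Rightarrow> 'a list \<Rightarrow> bool" where
  "comm_joinable C w1 w2 \<longleftrightarrow>
     (comm_swap C)\<^sup>*\<^sup>* w1 w2 \<or> (\<exists>w3. comm_cancel C w1 w3 \<and> comm_cancel C w2 w3)"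

lemma append_Cons_eq_append_Cons_cases:
  assumes "xs @ a # ys = zs @ b # ts"
  obtains t where "xs = zs @ b # t" "ts = t @ a # ys"
    | "xs = zs" "a = b" "ys = ts"
    | t where "zs = xs @ a # t" "ys = t @ b # ts"
proof -
  from assms obtain us where
    "xs = zs @ us \<and> us @ a # ys = b # ts \<or> xs @ us = zs \<and> a # ys = us @ b # ts"
    by (auto simp: append_eq_append_conv2)
  then show thesis
  proof (elim disjE conjE)
    assume "xs = zs @ us" "us @ a # ys = b # ts"
    then show thesis using that(1,2) by (cases us) auto
  next
    assume "xs @ us = zs" "a # ys = us @ b # ts"
    then show thesis using that(2,3) by (cases us) auto
  qed
qed

lemma comm_swaps_move:
  assumes "\<forall>c\<in>set m. C a c"
  shows "(comm_swap C)\<^sup>*\<^sup>* (x @ a # m @ y) (x @ m @ a # y)"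
  using assms
proof (induction m arbitrary: x)
  case (Cons c m)
  have "comm_swap C (x @ a # c # m @ y) ((x @ [c]) @ a # m @ y)"
    using comm_swapI[of C a c x "m @ y"] Cons.prems by simp
  moreover have "(comm_swap C)\<^sup>*\<^sup>* ((x @ [c]) @ a # m @ y) ((x @ [c]) @ m @ a # y)"
    using Cons.IH[of "x @ [c]"] Cons.prems by simp
  ultimately show ?case
    by (metis append_Cons append_assoc append_Nil converse_rtranclp_into_rtranclp)
qed simp

lemma comm_swap_sym:
  assumes "symp C" "comm_swap C x y"
  shows "comm_swap C y x"
  using assms(2)
proof cases
  case (comm_swapI s t u v)
  then show ?thesis using comm_swap.comm_swapI[of C t s u v] sympD[OF assms(1)] by simp
qed

lemma comm_swaps_sym:
  assumes "symp C" "(comm_swap C)\<^sup>*\<^sup>* x y"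
  shows "(comm_swap C)\<^sup>*\<^sup>* y x"
  using assms(2) by (induction rule: rtranclp_induct)
    (simp, metis comm_swap_sym[OF assms(1)] converse_rtranclp_into_rtranclp)

lemma comm_joinable_sym:
  assumes "symp C" "comm_joinable C w1 w2"
  shows "comm_joinable C w2 w1"
  using assms(2) comm_swaps_sym[OF assms(1), of w1 w2] unfolding comm_joinable_def by blast

lemma comm_joinable_swapsI:
  "symp C \<Longrightarrow> (comm_swap C)\<^sup>*\<^sup>* w2 w1 \<Longrightarrow> comm_joinable C w1 w2"
  unfolding comm_joinable_def by (blast intro: comm_swaps_sym)

lemma comm_joinable_cancelI:
  "comm_cancel C w1 w3 \<Longrightarrow> comm_cancel C w2 w3 \<Longrightarrow> comm_joinable C w1 w2"
  unfolding comm_joinable_def by blast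

lemma comm_cancel_join_same_start:
  assumes "symp C" "m1 @ a # v1 = m2 @ a # v2" "\<forall>c\<in>set m1. C a c" "\<forall>c\<in>set m2. C a c"
  shows "comm_joinable C (u @ m1 @ v1) (u @ m2 @ v2)"
  using assms(2)
proof (cases rule: append_Cons_eq_append_Cons_cases)
  case (1 t)
  then have "(comm_swap C)\<^sup>*\<^sup>* (u @ m1 @ v1) (u @ m2 @ v2)"
    using comm_swaps_move[of t C a "u @ m2" v1] assms(3) by simp
  then show ?thesis by (simp add: comm_joinable_def)
next
  case 2
  then show ?thesis by (simp add: comm_joinable_def)
next
  case (3 t)
  then have "(comm_swap C)\<^sup>*\<^sup>* (u @ m2 @ v2) (u @ m1 @ v1)"
    using comm_swaps_move[of t C a "u @ m1" v2] assms(4) by simp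
  then show ?thesis by (rule comm_joinable_swapsI[OF assms(1)])
qed

lemma comm_cancel_join_inner:
  assumes "symp C" "m2 @ b # v2 = t2 @ a # v1"
    and "\<forall>c\<in>set (t @ b # t2). C a c" "\<forall>c\<in>set m2. C b c"
  shows "comm_joinable C (u @ t @ b # t2 @ v1) (u @ a # t @ m2 @ v2)"
  using assms(2)
proof (cases rule: append_Cons_eq_append_Cons_cases)
  case (1 t3)
  show ?thesis
  proof (rule comm_joinable_cancelI)
    show "comm_cancel C (u @ t @ b # t2 @ v1) (u @ t @ t2 @ t3 @ v2)"
      using comm_cancelI[of "t2 @ t3" C b "u @ t" v2] 1 assms(4) by simp
    show "comm_cancel C (u @ a # t @ m2 @ v2) (u @ t @ t2 @ t3 @ v2)"
      using comm_cancelI[of "t @ t2" C a u "t3 @ v2"] 1 assms(3) by simp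
  qed
next
  case 2
  then have "(comm_swap C)\<^sup>*\<^sup>* (u @ a # t @ m2 @ v2) (u @ t @ b # t2 @ v1)"
    using comm_swaps_move[of t C a u "m2 @ v2"] assms(3) by simp
  then show ?thesis by (rule comm_joinable_swapsI[OF assms(1)])
next
  case (3 t3)
  show ?thesis
  proof (rule comm_joinable_cancelI)
    show "comm_cancel C (u @ t @ b # t2 @ v1) (u @ t @ m2 @ t3 @ v1)"
      using comm_cancelI[of m2 C b "u @ t" "t3 @ v1"] 3 assms(4) by simp
    show "comm_cancel C (u @ a # t @ m2 @ v2) (u @ t @ m2 @ t3 @ v1)"
      using comm_cancelI[of "t @ m2 @ t3" C a u v1] 3 assms(3) by simp
  qed
qed

lemma comm_cancel_join_later_start:
  assumes "symp C" "m1 @ a # v1 = t @ b # m2 @ b # v2"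
    and "\<forall>c\<in>set m1. C a c" "\<forall>c\<in>set m2. C b c"
  shows "comm_joinable C (u @ m1 @ v1) (u @ a # t @ m2 @ v2)"
  using assms(2)
proof (cases rule: append_Cons_eq_append_Cons_cases)
  case (1 t2)
  then show ?thesis
    using comm_cancel_join_inner[OF assms(1) _ _ assms(4), of v2 t2 a v1 t u] assms(3) by simp
next
  case 2
  then have "(comm_swap C)\<^sup>*\<^sup>* (u @ a # t @ m2 @ v2) (u @ m1 @ v1)"
    using comm_swaps_move[of "t @ m2" C a u v2] assms(3,4) by auto
  then show ?thesis by (rule comm_joinable_swapsI[OF assms(1)])
next
  case (3 t2)
  show ?thesis
  proof (rule comm_joinable_cancelI)
    show "comm_cancel C (u @ m1 @ v1) (u @ m1 @ t2 @ m2 @ v2)"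
      using comm_cancelI[of m2 C b "u @ m1 @ t2" v2] 3 assms(4) by simp
    show "comm_cancel C (u @ a # t @ m2 @ v2) (u @ m1 @ t2 @ m2 @ v2)"
      using comm_cancelI[of m1 C a u "t2 @ m2 @ v2"] 3 assms(3) by simp
  qed
qed

lemma comm_cancel_confluent:
  assumes "symp C" "comm_cancel C w w1" "comm_cancel C w w2"
  shows "comm_joinable C w1 w2"
proof -
  from assms(2) obtain u1 a m1 v1 where
    w: "w = u1 @ a # m1 @ a # v1" and w1: "w1 = u1 @ m1 @ v1" and ca: "\<forall>c\<in>set m1. C a c"
    by cases
  from assms(3) obtain u2 b m2 v2 where
    w': "w = u2 @ b # m2 @ b # v2" and w2: "w2 = u2 @ m2 @ v2" and cb: "\<forall>c\<in>set m2. C b c"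
    by cases
  from w w' have "u1 @ a # m1 @ a # v1 = u2 @ b # m2 @ b # v2" by simp
  then show ?thesis
  proof (cases rule: append_Cons_eq_append_Cons_cases)
    case (1 t)
    then have "comm_joinable C w2 w1"
      using comm_cancel_join_later_start[OF assms(1) _ cb ca, of v2 t v1 u2] w1 w2 by simp
    then show ?thesis by (rule comm_joinable_sym[OF assms(1)])
  next
    case 2
    then show ?thesis using comm_cancel_join_same_start[OF assms(1) _ ca] cb w1 w2 by simp
  next
    case (3 t)
    then show ?thesis
      using comm_cancel_join_later_start[OF assms(1) _ ca cb, of v1 t v2 u1] w1 w2 by simp
  qed
qed

lemma comm_swap_cancel_commute_right:
  assumes "m @ a # v = t1 @ s # t # y" "\<forall>c\<in>set m. C a c" "C s t"
  shows "\<exists>w1'. comm_cancel C (u @ a # t1 @ t # s # y) w1' \<and> (comm_swap C)\<^sup>=\<^sup>= (u @ m @ v) w1'"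
  using assms(1)
proof (cases rule: append_Cons_eq_append_Cons_cases)
  case (1 t2)
  show ?thesis
  proof (cases t2)
    case Nil
    then have "comm_cancel C (u @ a # t1 @ t # s # y) (u @ m @ v)"
      using comm_cancelI[of t1 C a u "s # v"] 1 assms(2) by simp
    then show ?thesis by blast
  next
    case (Cons c t3)
    then have "comm_cancel C (u @ a # t1 @ t # s # y) (u @ t1 @ t # s # t3 @ v)"
      using comm_cancelI[of "t1 @ t # s # t3" C a u v] 1 assms(2) by auto
    moreover have "comm_swap C (u @ m @ v) (u @ t1 @ t # s # t3 @ v)"
      using comm_swapI[of C s t "u @ t1" "t3 @ v"] 1 Cons assms(3) by simp
    ultimately show ?thesis by blast
  qed
next
  case 2
  then have "comm_cancel C (u @ a # t1 @ t # s # y) (u @ m @ v)"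
    using comm_cancelI[of "t1 @ [t]" C a u y] assms(2,3) by simp
  then show ?thesis by blast
next
  case (3 t2)
  then have "comm_cancel C (u @ a # t1 @ t # s # y) (u @ m @ t2 @ t # s # y)"
    using comm_cancelI[of m C a u "t2 @ t # s # y"] assms(2) by simp
  moreover have "comm_swap C (u @ m @ v) (u @ m @ t2 @ t # s # y)"
    using comm_swapI[of C s t "u @ m @ t2" y] 3 assms(3) by simp
  ultimately show ?thesis by blast
qed

lemma comm_swap_cancel_commute_left:
  assumes "symp C" "t # y = t1 @ a # m @ a # v" "\<forall>c\<in>set m. C a c" "C s t"
  shows "\<exists>w1'. comm_cancel C (x @ t # s # y) w1' \<and> (comm_swap C)\<^sup>=\<^sup>= (x @ s # t1 @ m @ v) w1'"
proof (cases t1)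
  case Nil
  then have "comm_cancel C (x @ t # s # y) (x @ s # t1 @ m @ v)"
    using comm_cancelI[of "s # m" C a x v] assms(2,3,4) sympD[OF assms(1)] by simp
  then show ?thesis by blast
next
  case (Cons c t2)
  then have "comm_cancel C (x @ t # s # y) (x @ t # s # t2 @ m @ v)"
    using comm_cancelI[of m C a "x @ t # s # t2" v] assms(2,3) by simp
  moreover have "comm_swap C (x @ s # t1 @ m @ v) (x @ t # s # t2 @ m @ v)"
    using comm_swapI[of C s t x "t2 @ m @ v"] Cons assms(2,4) by simp
  ultimately show ?thesis by blast
qed

lemma comm_swap_cancel_commute:
  assumes "symp C" "comm_swap C w w'" "comm_cancel C w w1"
  shows "\<exists>w1'. comm_cancel C w' w1' \<and> (comm_swap C)\<^sup>=\<^sup>= w1 w1'"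
proof -
  from assms(2) obtain x s t y where
    w: "w = x @ s # t # y" and w': "w' = x @ t # s # y" and st: "C s t"
    by cases
  from assms(3) obtain u a m v where
    wu: "w = u @ a # m @ a # v" and w1: "w1 = u @ m @ v" and ca: "\<forall>c\<in>set m. C a c"
    by cases
  from w wu have "x @ s # t # y = u @ a # m @ a # v" by simp
  then show ?thesis
  proof (cases rule: append_Cons_eq_append_Cons_cases)
    case (1 t1)
    then show ?thesis using comm_swap_cancel_commute_right[of m a v t1 s t y C u] ca st w' w1 by simp
  next
    case 2
    show ?thesis
    proof (cases m)
      case Nil
      then have "comm_cancel C w' w1" using 2 w w' wu assms(3) by simp
      then show ?thesis by blast
    next
      case (Cons c m')
      then have "comm_cancel C w' w1"
        using comm_cancelI[of m' C a "x @ [c]" v] 2 w' w1 ca by simp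
      then show ?thesis by blast
    qed
  next
    case (3 t1)
    then show ?thesis
      using comm_swap_cancel_commute_left[OF assms(1) _ ca st, of y t1 v x] w' w1 by simp
  qed
qed

lemma comm_swaps_steps: "(comm_swap C)\<^sup>*\<^sup>* x y \<Longrightarrow> (comm_step C)\<^sup>*\<^sup>* x y"
  by (rule mono_rtranclp[rule_format, of "comm_swap C"]) (simp add: comm_step_def)

lemma comm_trivial_cancel:
  assumes "symp C" "comm_trivial C w" "comm_cancel C w w'"
  shows "comm_trivial C w'"
  using assms(2,3) unfolding comm_trivial_def
proof (induction arbitrary: w' rule: converse_rtranclp_induct)
  case base
  then show ?case by cases simp
next
  case (step w w1)
  from step.hyps(1) consider "comm_swap C w w1" | "comm_cancel C w w1"
    by (auto simp: comm_step_def)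
  then show ?case
  proof cases
    case 1
    with comm_swap_cancel_commute[OF assms(1) 1 step.prems] obtain w1' where
      "comm_cancel C w1 w1'" "(comm_swap C)\<^sup>=\<^sup>= w' w1'"
      by blast
    with step.IH show ?thesis
      by (auto simp: comm_step_def intro: converse_rtranclp_into_rtranclp)
  next
    case 2
    with comm_cancel_confluent[OF assms(1) step.prems] have "comm_joinable C w' w1" by simp
    then show ?thesis unfolding comm_joinable_def
    proof (elim disjE exE conjE)
      assume "(comm_swap C)\<^sup>*\<^sup>* w' w1"
      then show ?thesis using step.hyps(2) by (meson comm_swaps_steps rtranclp_trans)
    next
      fix w3 assume "comm_cancel C w' w3" "comm_cancel C w1 w3"
      then show ?thesis using step.IH
        by (auto simp: comm_step_def intro: converse_rtranclp_into_rtranclp)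
    qed
  qed
qed

lemma comm_step_map:
  assumes "\<And>x y. C x y \<Longrightarrow> C' (f x) (f y)" "comm_step C u v"
  shows "comm_step C' (map f u) (map f v)"
  using assms(2)[unfolded comm_step_def]
proof (elim disjE)
  assume "comm_swap C u v"
  then show ?thesis
  proof cases
    case (comm_swapI s t x y)
    then show ?thesis using comm_swap.comm_swapI[of C' "f s" "f t" "map f x" "map f y"] assms(1)
      by (simp add: comm_step_def)
  qed
next
  assume "comm_cancel C u v"
  then show ?thesis
  proof cases
    case (comm_cancelI m a x y)
    then show ?thesis using comm_cancel.comm_cancelI[of "map f m" C' "f a" "map f x" "map f y"] assms(1)
      by (simp add: comm_step_def)
  qed
qed

lemma comm_trivial_map:
  assumes "\<And>x y. C x y \<Longrightarrow> C' (f x) (f y)" "comm_trivial C u"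
  shows "comm_trivial C' (map f u)"
proof -
  have "(comm_step C)\<^sup>*\<^sup>* u []" using assms(2) by (simp add: comm_trivial_def)
  then have "(comm_step C')\<^sup>*\<^sup>* (map f u) (map f [])"
    by (induction rule: rtranclp_induct) (auto intro: rtranclp.rtrancl_into_rtrancl comm_step_map assms(1))
  then show ?thesis by (simp add: comm_trivial_def)
qed

section \<open>Groups given by involutive presentations\<close>

lemma pres_eq_lists: "(u, v) \<in> pres_eq Xs Rs \<Longrightarrow> u \<in> lists Xs \<and> v \<in> lists Xs"
  by (induction rule: pres_eq.induct) auto

lemma equiv_pres_eq: "equiv (lists Xs) (pres_eq Xs Rs)"
proof (rule equivI)
  show "pres_eq Xs Rs \<subseteq> lists Xs \<times> lists Xs" using pres_eq_lists by fast
  show "refl_on (lists Xs) (pres_eq Xs Rs)" by (rule refl_onI) (rule pe_refl)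
  show "sym (pres_eq Xs Rs)" by (rule symI) (rule pe_sym)
  show "trans (pres_eq Xs Rs)" by (rule transI) (rule pe_trans)
qed

lemma pres_eq_append_cong:
  assumes "(x, y) \<in> pres_eq Xs Rs" "u \<in> lists Xs" "v \<in> lists Xs"
  shows "(u @ x @ v, u @ y @ v) \<in> pres_eq Xs Rs"
  using assms
proof (induction rule: pres_eq.induct)
  case (pe_refl w) then show ?case by (intro pres_eq.pe_refl) auto
next
  case (pe_sym a b) then show ?case by (auto intro: pres_eq.pe_sym)
next
  case (pe_trans a b c) then show ?case by (auto intro: pres_eq.pe_trans)
next
  case (pe_inv a b z)
  then show ?case using pres_eq.pe_inv[of "u @ a" Xs "b @ v" z Rs] by simp
next
  case (pe_rel a b p q)
  then show ?case using pres_eq.pe_rel[of "u @ a" Xs "b @ v" p q Rs] by simp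
qed

lemma pres_eq_append_rev: "u \<in> lists Xs \<Longrightarrow> (u @ rev u, []) \<in> pres_eq Xs Rs"
proof (induction u rule: rev_induct)
  case (snoc x xs)
  then have "(xs @ [x, x] @ rev xs, xs @ rev xs) \<in> pres_eq Xs Rs"
    by (intro pe_inv) auto
  with snoc show ?case by (auto intro: pe_trans)
qed (auto intro: pe_refl)

lemma pres_eq_rev_append: "u \<in> lists Xs \<Longrightarrow> (rev u @ u, []) \<in> pres_eq Xs Rs"
  using pres_eq_append_rev[of "rev u" Xs Rs] by (simp add: in_lists_conv_set)

definition pres_class :: "'a set \<Rightarrow> ('a list \<times> 'a list) set \<Rightarrow> 'a list \<Rightarrow> 'a list set" where
  "pres_class Xs Rs u = pres_eq Xs Rs `` {u}"

lemma pres_class_eq_iff: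
  "u \<in> lists Xs \<Longrightarrow> v \<in> lists Xs \<Longrightarrow> pres_class Xs Rs u = pres_class Xs Rs v \<longleftrightarrow> (u, v) \<in> pres_eq Xs Rs"
  unfolding pres_class_def by (rule eq_equiv_class_iff[OF equiv_pres_eq])

lemma pres_class_self: "u \<in> lists Xs \<Longrightarrow> u \<in> pres_class Xs Rs u"
  unfolding pres_class_def by (rule equiv_class_self[OF equiv_pres_eq])

lemma mem_pres_class_iff: "w \<in> pres_class Xs Rs u \<longleftrightarrow> (u, w) \<in> pres_eq Xs Rs"
  unfolding pres_class_def by simp

lemma pres_group_carrier_iff:
  "x \<in> carrier (pres_group Xs Rs) \<longleftrightarrow> (\<exists>u\<in>lists Xs. x = pres_class Xs Rs u)"
  unfolding pres_group_def pres_class_def by (auto simp: quotient_def)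

lemma pres_group_one: "\<one>\<^bsub>pres_group Xs Rs\<^esub> = pres_class Xs Rs []"
  by (simp add: pres_group_def pres_class_def)

lemma pres_group_mult:
  assumes "u \<in> lists Xs" "v \<in> lists Xs"
  shows "pres_class Xs Rs u \<otimes>\<^bsub>pres_group Xs Rs\<^esub> pres_class Xs Rs v = pres_class Xs Rs (u @ v)"
proof -
  have "pres_eq Xs Rs `` {a @ b} = pres_class Xs Rs (u @ v)"
    if "a \<in> pres_class Xs Rs u" "b \<in> pres_class Xs Rs v" for a b
  proof -
    from that have ua: "(u, a) \<in> pres_eq Xs Rs" and vb: "(v, b) \<in> pres_eq Xs Rs"
      by (auto simp: mem_pres_class_iff)
    have "a \<in> lists Xs" using pres_eq_lists[OF ua] by simp
    then have "(u @ v, a @ b) \<in> pres_eq Xs Rs"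
      using pres_eq_append_cong[OF ua, of "[]" v] pres_eq_append_cong[OF vb, of a "[]"] assms
      by (auto intro: pe_trans)
    then show ?thesis
      unfolding pres_class_def by (metis equiv_class_eq[OF equiv_pres_eq] pe_sym)
  qed
  then show ?thesis
    using pres_class_self[OF assms(1), of Rs] pres_class_self[OF assms(2), of Rs]
    unfolding pres_group_def by auto
qed

lemma group_pres_group: "group (pres_group Xs Rs)"
proof (rule groupI)
  fix x y assume "x \<in> carrier (pres_group Xs Rs)" "y \<in> carrier (pres_group Xs Rs)"
  then obtain u v where "u \<in> lists Xs" "v \<in> lists Xs" "x = pres_class Xs Rs u" "y = pres_class Xs Rs v"
    by (auto simp: pres_group_carrier_iff)
  then show "x \<otimes>\<^bsub>pres_group Xs Rs\<^esub> y \<in> carrier (pres_group Xs Rs)"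
    unfolding pres_group_carrier_iff by (metis pres_group_mult append_in_lists_conv)
next
  show "\<one>\<^bsub>pres_group Xs Rs\<^esub> \<in> carrier (pres_group Xs Rs)"
    by (auto simp: pres_group_one pres_group_carrier_iff)
next
  fix x y z
  assume "x \<in> carrier (pres_group Xs Rs)" "y \<in> carrier (pres_group Xs Rs)" "z \<in> carrier (pres_group Xs Rs)"
  then obtain u v w where "u \<in> lists Xs" "v \<in> lists Xs" "w \<in> lists Xs"
    "x = pres_class Xs Rs u" "y = pres_class Xs Rs v" "z = pres_class Xs Rs w"
    by (auto simp: pres_group_carrier_iff)
  then show "x \<otimes>\<^bsub>pres_group Xs Rs\<^esub> y \<otimes>\<^bsub>pres_group Xs Rs\<^esub> z =
      x \<otimes>\<^bsub>pres_group Xs Rs\<^esub> (y \<otimes>\<^bsub>pres_group Xs Rs\<^esub> z)"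
    by (simp add: pres_group_mult)
next
  fix x assume "x \<in> carrier (pres_group Xs Rs)"
  then obtain u where "u \<in> lists Xs" "x = pres_class Xs Rs u"
    by (auto simp: pres_group_carrier_iff)
  then show "\<one>\<^bsub>pres_group Xs Rs\<^esub> \<otimes>\<^bsub>pres_group Xs Rs\<^esub> x = x"
    by (simp add: pres_group_one pres_group_mult)
next
  fix x assume "x \<in> carrier (pres_group Xs Rs)"
  then obtain u where u: "u \<in> lists Xs" "x = pres_class Xs Rs u"
    by (auto simp: pres_group_carrier_iff)
  have ru: "rev u \<in> lists Xs" using u(1) by (simp add: in_lists_conv_set)
  have "pres_class Xs Rs (rev u) \<otimes>\<^bsub>pres_group Xs Rs\<^esub> x = \<one>\<^bsub>pres_group Xs Rs\<^esub>"
    using u ru by (simp add: pres_group_mult pres_group_one pres_class_eq_iff pres_eq_rev_append)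
  moreover have "pres_class Xs Rs (rev u) \<in> carrier (pres_group Xs Rs)"
    using u by (auto simp: pres_group_carrier_iff)
  ultimately show "\<exists>y\<in>carrier (pres_group Xs Rs). y \<otimes>\<^bsub>pres_group Xs Rs\<^esub> x = \<one>\<^bsub>pres_group Xs Rs\<^esub>"
    by blast
qed

definition pres_lift :: "('a list \<Rightarrow> 'b) \<Rightarrow> 'a list set \<Rightarrow> 'b" where
  "pres_lift f A = f (SOME w. w \<in> A)"

lemma pres_lift_class:
  assumes "\<And>u v. (u, v) \<in> pres_eq Xs Rs \<Longrightarrow> f u = f v" "u \<in> lists Xs"
  shows "pres_lift f (pres_class Xs Rs u) = f u"
proof -
  have "(SOME w. w \<in> pres_class Xs Rs u) \<in> pres_class Xs Rs u"
    using pres_class_self[OF assms(2)] by (rule someI)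
  then show ?thesis unfolding pres_lift_def by (metis assms(1) mem_pres_class_iff)
qed

lemma pres_lift_hom:
  assumes "\<And>u v. (u, v) \<in> pres_eq Xs Rs \<Longrightarrow> f u = f v"
    and "\<And>u. u \<in> lists Xs \<Longrightarrow> f u \<in> carrier M"
    and "\<And>u v. u \<in> lists Xs \<Longrightarrow> v \<in> lists Xs \<Longrightarrow> f (u @ v) = f u \<otimes>\<^bsub>M\<^esub> f v"
  shows "pres_lift f \<in> hom (pres_group Xs Rs) M"
proof (rule homI)
  fix x assume "x \<in> carrier (pres_group Xs Rs)"
  then obtain u where "u \<in> lists Xs" "x = pres_class Xs Rs u"
    by (auto simp: pres_group_carrier_iff)
  then show "pres_lift f x \<in> carrier M"
    by (simp add: pres_lift_class[OF assms(1)] assms(2))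
next
  fix x y assume "x \<in> carrier (pres_group Xs Rs)" "y \<in> carrier (pres_group Xs Rs)"
  then obtain u v where "u \<in> lists Xs" "v \<in> lists Xs" "x = pres_class Xs Rs u" "y = pres_class Xs Rs v"
    by (auto simp: pres_group_carrier_iff)
  then show "pres_lift f (x \<otimes>\<^bsub>pres_group Xs Rs\<^esub> y) = pres_lift f x \<otimes>\<^bsub>M\<^esub> pres_lift f y"
    by (simp add: pres_group_mult pres_lift_class[OF assms(1)] assms(3))
qed

lemma pres_lift_inj_on:
  assumes "\<And>u v. (u, v) \<in> pres_eq Xs Rs \<Longrightarrow> f u = f v"
    and "\<And>u v. u \<in> lists Xs \<Longrightarrow> v \<in> lists Xs \<Longrightarrow> f (u @ v) = f u \<otimes>\<^bsub>M\<^esub> f v"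
    and "\<And>w. w \<in> lists Xs \<Longrightarrow> f w = f [] \<Longrightarrow> (w, []) \<in> pres_eq Xs Rs"
  shows "inj_on (pres_lift f) (carrier (pres_group Xs Rs))"
proof (rule inj_onI)
  fix x y assume "x \<in> carrier (pres_group Xs Rs)" "y \<in> carrier (pres_group Xs Rs)"
    and eq: "pres_lift f x = pres_lift f y"
  then obtain u v where uv: "u \<in> lists Xs" "v \<in> lists Xs" "x = pres_class Xs Rs u" "y = pres_class Xs Rs v"
    by (auto simp: pres_group_carrier_iff)
  have rv: "rev v \<in> lists Xs" using uv(2) by (simp add: in_lists_conv_set)
  have "f (u @ rev v) = f (v @ rev v)"
    using eq uv rv by (simp add: pres_lift_class[OF assms(1)] assms(2))
  also have "\<dots> = f []" by (rule assms(1)[OF pres_eq_append_rev[OF uv(2)]])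
  finally have "(u @ rev v, []) \<in> pres_eq Xs Rs" using assms(3) uv rv by simp
  then have uv_v: "(u @ rev v @ v, v) \<in> pres_eq Xs Rs"
    using pres_eq_append_cong[of "u @ rev v" "[]" Xs Rs "[]" v] uv by simp
  have uv_u: "(u @ rev v @ v, u) \<in> pres_eq Xs Rs"
    using pres_eq_append_cong[OF pres_eq_rev_append[OF uv(2)], of u "[]"] uv by simp
  have "(u, v) \<in> pres_eq Xs Rs" by (rule pe_trans[OF pe_sym[OF uv_u] uv_v])
  then show "x = y" using uv pres_class_eq_iff by metis
qed

lemma pres_lift_image:
  assumes "\<And>u v. (u, v) \<in> pres_eq Xs Rs \<Longrightarrow> f u = f v"
  shows "pres_lift f ` carrier (pres_group Xs Rs) = f ` lists Xs"
proof (intro equalityI subsetI)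
  fix y assume "y \<in> pres_lift f ` carrier (pres_group Xs Rs)"
  then obtain x where "x \<in> carrier (pres_group Xs Rs)" "y = pres_lift f x" by blast
  then obtain u where "u \<in> lists Xs" "y = pres_lift f (pres_class Xs Rs u)"
    unfolding pres_group_carrier_iff by blast
  then show "y \<in> f ` lists Xs" by (simp add: pres_lift_class[OF assms])
next
  fix y assume "y \<in> f ` lists Xs"
  then obtain u where u: "u \<in> lists Xs" "y = f u" by blast
  then have "pres_class Xs Rs u \<in> carrier (pres_group Xs Rs)"
    by (auto simp: pres_group_carrier_iff)
  moreover have "y = pres_lift f (pres_class Xs Rs u)" using u by (simp add: pres_lift_class[OF assms])
  ultimately show "y \<in> pres_lift f ` carrier (pres_group Xs Rs)" by blast
qed

section \<open>The word problem in right-angled Coxeter groups\<close>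

definition racg_commuting :: "('v \<Rightarrow> 'v \<Rightarrow> bool) \<Rightarrow> 'v \<Rightarrow> 'v \<Rightarrow> bool" where
  "racg_commuting E x y \<longleftrightarrow> x = y \<or> E x y \<or> E y x"

lemma symp_racg_commuting: "symp (racg_commuting E)"
  by (auto simp: racg_commuting_def intro: sympI)

lemma pres_eq_racg_comm_trivial_iff:
  assumes "(u, v) \<in> pres_eq V (racg_rel V E)"
  shows "comm_trivial (racg_commuting E) u \<longleftrightarrow> comm_trivial (racg_commuting E) v"
  using assms
proof (induction rule: pres_eq.induct)
  case (pe_inv u v x)
  have "comm_cancel (racg_commuting E) (u @ [x, x] @ v) (u @ v)"
    using comm_cancelI[of "[]" "racg_commuting E" x u v] by simp
  then show ?case
    using comm_trivial_cancel[OF symp_racg_commuting]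
    by (auto simp: comm_trivial_def comm_step_def intro: converse_rtranclp_into_rtranclp)
next
  case (pe_rel u v a b)
  then obtain s t where ab: "a = [s, t]" "b = [t, s]" "E s t" by (auto simp: racg_rel_def)
  then have "comm_swap (racg_commuting E) (u @ a @ v) (u @ b @ v)"
    "comm_swap (racg_commuting E) (u @ b @ v) (u @ a @ v)"
    using comm_swapI[of "racg_commuting E" s t u v] comm_swapI[of "racg_commuting E" t s u v]
    by (simp_all add: racg_commuting_def)
  then show ?case
    by (auto simp: comm_trivial_def comm_step_def intro: converse_rtranclp_into_rtranclp)
qed auto

section \<open>The twisted generators in the semidirect product\<close>

locale twisted_racg =
  fixes V :: "'v set" and E :: "'v \<Rightarrow> 'v \<Rightarrow> bool"
    and Gs :: "('v list set \<Rightarrow> 'v list set) set"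
    and I :: "'v list set set"
    and g :: "'v list set \<Rightarrow> 'v list set \<Rightarrow> 'v list set"
    and W S GG
  assumes W_def: "W = racg V E"
    and S_def: "S = racg_S V E"
    and GG_def: "GG = (AutS W S)\<lparr>carrier := Gs\<rparr>"
    and subgroup_Gs: "subgroup Gs (AutS W S)"
    and I_subset_S: "I \<subseteq> S"
    and g_in_Gs: "i \<in> I \<Longrightarrow> g i \<in> Gs"
    and g_involutive: "i \<in> I \<Longrightarrow> g i \<otimes>\<^bsub>GG\<^esub> g i = \<one>\<^bsub>GG\<^esub>"
    and g_exchange: "i \<in> I \<Longrightarrow> j \<in> I \<Longrightarrow> i \<otimes>\<^bsub>W\<^esub> j = j \<otimes>\<^bsub>W\<^esub> i \<Longrightarrow>
        (g i j \<in> I \<and> g j i = i \<and> g (g i j) = g i \<otimes>\<^bsub>GG\<^esub> g j \<otimes>\<^bsub>GG\<^esub> g i) \<or>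
        (g j i \<in> I \<and> g i j = j \<and> g (g j i) = g j \<otimes>\<^bsub>GG\<^esub> g i \<otimes>\<^bsub>GG\<^esub> g j)"
    and g_fixes: "i \<in> I \<Longrightarrow> g i i = i"
begin

abbreviation "W_rel \<equiv> racg_rel V E"
abbreviation "W_class \<equiv> pres_class V W_rel"
abbreviation "SD \<equiv> sdprod W GG"
abbreviation "L_rels \<equiv> L_rel W GG I g"

lemma W_eq: "W = pres_group V W_rel" by (simp add: W_def racg_def)

lemma group_W: "group W" by (simp add: W_eq group_pres_group)

lemma S_eq: "S = (\<lambda>v. W_class [v]) ` V"
  by (auto simp: S_def racg_S_def pres_gen_def pres_class_def)

lemma S_subset_W: "S \<subseteq> carrier W"
proof
  fix s assume "s \<in> S"
  then obtain v where "v \<in> V" "s = W_class [v]" by (auto simp: S_eq)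
  then show "s \<in> carrier W"
    unfolding W_eq pres_group_carrier_iff by (intro bexI[of _ "[v]"]) auto
qed

lemma I_subset_W: "i \<in> I \<Longrightarrow> i \<in> carrier W"
  using I_subset_S S_subset_W by auto

lemma W_mult: "u \<in> lists V \<Longrightarrow> v \<in> lists V \<Longrightarrow> W_class u \<otimes>\<^bsub>W\<^esub> W_class v = W_class (u @ v)"
  by (simp add: W_eq pres_group_mult)

lemma W_one: "\<one>\<^bsub>W\<^esub> = W_class []" by (simp add: W_eq pres_group_one)

lemma S_square: "s \<in> S \<Longrightarrow> s \<otimes>\<^bsub>W\<^esub> s = \<one>\<^bsub>W\<^esub>"
proof -
  assume "s \<in> S"
  then obtain v where v: "v \<in> V" "s = W_class [v]" by (auto simp: S_eq)
  have "([v, v], []) \<in> pres_eq V W_rel" using pe_inv[of "[]" V "[]" v W_rel] v by simp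
  then show ?thesis using v by (simp add: W_mult W_one pres_class_eq_iff)
qed

lemma carrier_GG [simp]: "carrier GG = Gs" by (simp add: GG_def)

lemma GG_apply_mult: "x \<in> carrier W \<Longrightarrow> (f \<otimes>\<^bsub>GG\<^esub> h) x = f (h x)"
  by (simp add: GG_def AutS_def compose_eq)

lemma GG_apply_one: "x \<in> carrier W \<Longrightarrow> \<one>\<^bsub>GG\<^esub> x = x"
  by (simp add: GG_def AutS_def)

lemma Gs_AutS: "f \<in> Gs \<Longrightarrow> f \<in> iso W W \<and> bij_betw f S S \<and> f \<in> extensional (carrier W)"
  using subgroup.subset[OF subgroup_Gs] by (auto simp: AutS_def)

lemma Gs_hom: "f \<in> Gs \<Longrightarrow> f \<in> hom W W"
  using Gs_AutS[of f] unfolding iso_def by blast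

lemma Gs_mult: "f \<in> Gs \<Longrightarrow> x \<in> carrier W \<Longrightarrow> y \<in> carrier W \<Longrightarrow> f (x \<otimes>\<^bsub>W\<^esub> y) = f x \<otimes>\<^bsub>W\<^esub> f y"
  by (rule hom_mult[OF Gs_hom])

lemma Gs_apply_carrier: "f \<in> Gs \<Longrightarrow> x \<in> carrier W \<Longrightarrow> f x \<in> carrier W"
  using Gs_hom[of f] unfolding hom_def by blast

lemma Gs_apply_one: "f \<in> Gs \<Longrightarrow> f \<one>\<^bsub>W\<^esub> = \<one>\<^bsub>W\<^esub>"
  by (rule hom_one[OF Gs_hom group_W group_W])

lemma Gs_apply_inj: "f \<in> Gs \<Longrightarrow> x \<in> carrier W \<Longrightarrow> y \<in> carrier W \<Longrightarrow> f x = f y \<Longrightarrow> x = y"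
  using Gs_AutS[of f] unfolding iso_def bij_betw_def inj_on_def by blast

lemma Gs_apply_S: "f \<in> Gs \<Longrightarrow> x \<in> S \<Longrightarrow> f x \<in> S"
  using Gs_AutS[of f] unfolding bij_betw_def by blast

lemma Gs_mult_closed: "f \<in> Gs \<Longrightarrow> h \<in> Gs \<Longrightarrow> f \<otimes>\<^bsub>GG\<^esub> h \<in> Gs"
  using subgroup.m_closed[OF subgroup_Gs] by (simp add: GG_def)

lemma one_GG_in_Gs: "\<one>\<^bsub>GG\<^esub> \<in> Gs"
  using subgroup.one_closed[OF subgroup_Gs] by (simp add: GG_def)

lemma Gs_eqI: "f \<in> Gs \<Longrightarrow> h \<in> Gs \<Longrightarrow> (\<And>x. x \<in> carrier W \<Longrightarrow> f x = h x) \<Longrightarrow> f = h"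
  by (rule extensionalityI[of f "carrier W" h]) (use Gs_AutS in auto)

lemma g_apply_g: "i \<in> I \<Longrightarrow> x \<in> carrier W \<Longrightarrow> g i (g i x) = x"
  using g_involutive GG_apply_mult[of x "g i" "g i"] GG_apply_one[of x] by auto

lemma carrier_SD: "carrier SD = carrier W \<times> Gs" by (simp add: sdprod_def)

lemma SD_mult: "(x, a) \<otimes>\<^bsub>SD\<^esub> (y, b) = (x \<otimes>\<^bsub>W\<^esub> a y, a \<otimes>\<^bsub>GG\<^esub> b)" by (simp add: sdprod_def)

lemma SD_one: "\<one>\<^bsub>SD\<^esub> = (\<one>\<^bsub>W\<^esub>, \<one>\<^bsub>GG\<^esub>)" by (simp add: sdprod_def)

lemma monoid_SD: "monoid SD"
proof -
  interpret W: group W by (rule group_W)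
  show ?thesis
  proof (rule monoidI)
    fix p q assume "p \<in> carrier SD" "q \<in> carrier SD"
    then show "p \<otimes>\<^bsub>SD\<^esub> q \<in> carrier SD"
      by (cases p, cases q) (auto simp: carrier_SD SD_mult Gs_mult_closed Gs_apply_carrier)
  next
    show "\<one>\<^bsub>SD\<^esub> \<in> carrier SD"
      by (simp add: carrier_SD SD_one one_GG_in_Gs group.is_monoid[OF group_W] monoid.one_closed)
  next
    fix p q r assume "p \<in> carrier SD" "q \<in> carrier SD" "r \<in> carrier SD"
    then obtain x a y b z c where pqr: "p = (x, a)" "q = (y, b)" "r = (z, c)"
      and h: "x \<in> carrier W" "y \<in> carrier W" "z \<in> carrier W" "a \<in> Gs" "b \<in> Gs" "c \<in> Gs"
      by (cases p, cases q, cases r) (auto simp: carrier_SD)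
    have "(x \<otimes>\<^bsub>W\<^esub> a y) \<otimes>\<^bsub>W\<^esub> (a \<otimes>\<^bsub>GG\<^esub> b) z = x \<otimes>\<^bsub>W\<^esub> a (y \<otimes>\<^bsub>W\<^esub> b z)"
      using h by (simp add: GG_apply_mult Gs_mult Gs_apply_carrier W.m_assoc)
    moreover have "(a \<otimes>\<^bsub>GG\<^esub> b) \<otimes>\<^bsub>GG\<^esub> c = a \<otimes>\<^bsub>GG\<^esub> (b \<otimes>\<^bsub>GG\<^esub> c)"
      using h by (intro Gs_eqI) (auto simp: Gs_mult_closed GG_apply_mult Gs_apply_carrier)
    ultimately show "p \<otimes>\<^bsub>SD\<^esub> q \<otimes>\<^bsub>SD\<^esub> r = p \<otimes>\<^bsub>SD\<^esub> (q \<otimes>\<^bsub>SD\<^esub> r)"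
      by (simp add: pqr SD_mult)
  next
    fix p assume "p \<in> carrier SD"
    then obtain y b where p: "p = (y, b)" "y \<in> carrier W" "b \<in> Gs" by (cases p) (auto simp: carrier_SD)
    have "\<one>\<^bsub>GG\<^esub> \<otimes>\<^bsub>GG\<^esub> b = b" "b \<otimes>\<^bsub>GG\<^esub> \<one>\<^bsub>GG\<^esub> = b"
      using p by (auto intro!: Gs_eqI simp: Gs_mult_closed one_GG_in_Gs GG_apply_mult GG_apply_one Gs_apply_carrier)
    then show "\<one>\<^bsub>SD\<^esub> \<otimes>\<^bsub>SD\<^esub> p = p" "p \<otimes>\<^bsub>SD\<^esub> \<one>\<^bsub>SD\<^esub> = p"
      using p by (simp_all add: SD_one SD_mult GG_apply_one Gs_apply_one)
  qed
qed

definition gen_prod :: "'v list set list \<Rightarrow> 'v list set \<times> ('v list set \<Rightarrow> 'v list set)" where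
  "gen_prod w = foldr (\<lambda>i p. (i, g i) \<otimes>\<^bsub>SD\<^esub> p) w \<one>\<^bsub>SD\<^esub>"

lemma gen_carrier: "i \<in> I \<Longrightarrow> (i, g i) \<in> carrier SD"
  by (simp add: carrier_SD I_subset_W g_in_Gs)

lemma gen_prod_Nil [simp]: "gen_prod [] = \<one>\<^bsub>SD\<^esub>"
  by (simp add: gen_prod_def)

lemma gen_prod_Cons: "gen_prod (i # w) = (i, g i) \<otimes>\<^bsub>SD\<^esub> gen_prod w"
  by (simp add: gen_prod_def)

lemma gen_prod_carrier: "w \<in> lists I \<Longrightarrow> gen_prod w \<in> carrier SD"
  by (induction w) (auto simp: gen_prod_Cons gen_carrier monoid.m_closed[OF monoid_SD]
      monoid.one_closed[OF monoid_SD])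

lemma gen_prod_append:
  "u \<in> lists I \<Longrightarrow> v \<in> lists I \<Longrightarrow> gen_prod (u @ v) = gen_prod u \<otimes>\<^bsub>SD\<^esub> gen_prod v"
  by (induction u) (auto simp: gen_prod_Cons gen_carrier gen_prod_carrier
      monoid.m_assoc[OF monoid_SD] monoid.l_one[OF monoid_SD])

lemma gen_prod_single: "i \<in> I \<Longrightarrow> gen_prod [i] = (i, g i)"
  by (simp add: gen_prod_Cons gen_carrier monoid.r_one[OF monoid_SD])

lemma gen_square: "i \<in> I \<Longrightarrow> (i, g i) \<otimes>\<^bsub>SD\<^esub> (i, g i) = \<one>\<^bsub>SD\<^esub>"
  using I_subset_S by (auto simp: SD_mult SD_one g_fixes S_square g_involutive)

lemma commute_g_apply:
  assumes "i \<in> I" "x \<in> carrier W" "i \<otimes>\<^bsub>W\<^esub> x = x \<otimes>\<^bsub>W\<^esub> i"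
  shows "i \<otimes>\<^bsub>W\<^esub> g i x = g i x \<otimes>\<^bsub>W\<^esub> i"
  using arg_cong[OF assms(3), of "g i"] assms(1,2)
  by (simp add: Gs_mult g_in_Gs I_subset_W g_fixes)

lemma gen_prod_L_rel:
  assumes "(a, b) \<in> L_rels"
  shows "gen_prod a = gen_prod b"
proof -
  from assms obtain i j where ab: "a = [i, j]" "b = [g i j, i]" and ij: "i \<in> I" "j \<in> I"
    and c: "i \<otimes>\<^bsub>W\<^esub> j = j \<otimes>\<^bsub>W\<^esub> i" and gji: "g j i = i" and k: "g i j \<in> I"
    and gk: "g (g i j) = g i \<otimes>\<^bsub>GG\<^esub> g j \<otimes>\<^bsub>GG\<^esub> g i"
    by (auto simp: L_rel_def)
  have "gen_prod a = (i \<otimes>\<^bsub>W\<^esub> g i j, g i \<otimes>\<^bsub>GG\<^esub> g j)"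
    using ab ij gen_prod_append[of "[i]" "[j]"] by (simp add: gen_prod_single SD_mult)
  also have "i \<otimes>\<^bsub>W\<^esub> g i j = g i j \<otimes>\<^bsub>W\<^esub> i"
    using commute_g_apply[OF ij(1) I_subset_W[OF ij(2)] c] .
  also have "g i \<otimes>\<^bsub>GG\<^esub> g j = g (g i j) \<otimes>\<^bsub>GG\<^esub> g i"
    using ij by (intro Gs_eqI) (auto simp: gk Gs_mult_closed g_in_Gs GG_apply_mult Gs_apply_carrier g_apply_g)
  also have "(g i j \<otimes>\<^bsub>W\<^esub> i, g (g i j) \<otimes>\<^bsub>GG\<^esub> g i) = gen_prod b"
    using ab ij k gen_prod_append[of "[g i j]" "[i]"]
    by (simp add: gen_prod_single SD_mult gk GG_apply_mult I_subset_W g_fixes gji)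
  finally show ?thesis .
qed

lemma gen_prod_pres_eq: "(u, v) \<in> pres_eq I L_rels \<Longrightarrow> gen_prod u = gen_prod v"
proof (induction rule: pres_eq.induct)
  case (pe_inv u v x)
  then show ?case
    using gen_prod_append[of u "[x, x] @ v"] gen_prod_append[of "[x, x]" v] gen_prod_append[of u v]
      gen_prod_append[of "[x]" "[x]"]
    by (simp add: gen_prod_single gen_square gen_prod_carrier monoid.l_one[OF monoid_SD])
next
  case (pe_rel u v a b)
  then show ?case
    using gen_prod_append[of u "a @ v"] gen_prod_append[of a v] gen_prod_append[of u "b @ v"]
      gen_prod_append[of b v] gen_prod_L_rel[OF pe_rel(3)]
    by simp
qed auto

primrec twisted_word :: "('v list set \<Rightarrow> 'v list set) \<Rightarrow> 'v list set list \<Rightarrow> 'v list set list" where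
  "twisted_word h [] = []"
| "twisted_word h (i # w) = h i # twisted_word (h \<otimes>\<^bsub>GG\<^esub> g i) w"

primrec twist :: "('v list set \<Rightarrow> 'v list set) \<Rightarrow> 'v list set list \<Rightarrow> 'v list set \<Rightarrow> 'v list set" where
  "twist h [] = h"
| "twist h (i # w) = twist (h \<otimes>\<^bsub>GG\<^esub> g i) w"

lemma twisted_word_append: "twisted_word h (u @ v) = twisted_word h u @ twisted_word (twist h u) v"
  by (induction u arbitrary: h) auto

lemma length_twisted_word [simp]: "length (twisted_word h w) = length w"
  by (induction w arbitrary: h) auto

lemma twist_in_Gs: "h \<in> Gs \<Longrightarrow> w \<in> lists I \<Longrightarrow> twist h w \<in> Gs"
  by (induction w arbitrary: h) (auto simp: Gs_mult_closed g_in_Gs)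

lemma twisted_word_in_S: "h \<in> Gs \<Longrightarrow> w \<in> lists I \<Longrightarrow> set (twisted_word h w) \<subseteq> S"
  by (induction w arbitrary: h) (auto simp: Gs_mult_closed g_in_Gs Gs_apply_S I_subset_S[THEN subsetD])

definition W_prod :: "'v list set list \<Rightarrow> 'v list set" where
  "W_prod xs = foldr (\<lambda>x p. x \<otimes>\<^bsub>W\<^esub> p) xs \<one>\<^bsub>W\<^esub>"

lemma apply_fst_gen_prod:
  "h \<in> Gs \<Longrightarrow> w \<in> lists I \<Longrightarrow> h (fst (gen_prod w)) = W_prod (twisted_word h w)"
proof (induction w arbitrary: h)
  case Nil then show ?case by (simp add: SD_one W_prod_def Gs_apply_one)
next
  case (Cons i w)
  then have i: "i \<in> I" and w: "w \<in> lists I" by auto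
  obtain x b where xb: "gen_prod w = (x, b)" by (cases "gen_prod w")
  then have x: "x \<in> carrier W" using gen_prod_carrier[OF w] by (simp add: carrier_SD)
  have "h (fst (gen_prod (i # w))) = h i \<otimes>\<^bsub>W\<^esub> (h \<otimes>\<^bsub>GG\<^esub> g i) x"
    using Cons.prems i x
    by (simp add: gen_prod_Cons xb SD_mult Gs_mult I_subset_W Gs_apply_carrier g_in_Gs GG_apply_mult)
  also have "(h \<otimes>\<^bsub>GG\<^esub> g i) x = W_prod (twisted_word (h \<otimes>\<^bsub>GG\<^esub> g i) w)"
    using Cons.IH[of "h \<otimes>\<^bsub>GG\<^esub> g i"] Cons.prems i w xb by (simp add: Gs_mult_closed g_in_Gs)
  finally show ?case by (simp add: W_prod_def)
qed

definition letter :: "'v list set \<Rightarrow> 'v" where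
  "letter s = (SOME v. v \<in> V \<and> s = W_class [v])"

lemma S_letter: "s \<in> S \<Longrightarrow> letter s \<in> V \<and> s = W_class [letter s]"
  unfolding letter_def by (rule someI_ex) (auto simp: S_eq)

lemma W_prod_S: "set xs \<subseteq> S \<Longrightarrow> W_prod xs = W_class (map letter xs) \<and> map letter xs \<in> lists V"
proof (induction xs)
  case Nil then show ?case by (simp add: W_prod_def W_one)
next
  case (Cons s xs)
  then have s: "letter s \<in> V" "s = W_class [letter s]" using S_letter by auto
  have "W_prod (s # xs) = W_class [letter s] \<otimes>\<^bsub>W\<^esub> W_class (map letter xs)"
    using Cons s by (simp add: W_prod_def)
  also have "\<dots> = W_class (letter s # map letter xs)"
    using W_mult[of "[letter s]" "map letter xs"] Cons.IH Cons.prems s(1) by simp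
  finally show ?case using Cons s by simp
qed

abbreviation commute_W :: "'v list set \<Rightarrow> 'v list set \<Rightarrow> bool" where
  "commute_W a c \<equiv> a \<otimes>\<^bsub>W\<^esub> c = c \<otimes>\<^bsub>W\<^esub> a"

lemma racg_commuting_commute_W: "racg_commuting E x y \<Longrightarrow> commute_W (W_class [x]) (W_class [y])"
proof (cases "x \<in> V \<and> y \<in> V")
  case True
  assume "racg_commuting E x y"
  then consider "x = y" | "E x y" | "E y x" by (auto simp: racg_commuting_def)
  then have "W_class [x, y] = W_class [y, x]"
  proof cases
    case 2
    then have "([] @ [x, y] @ [], [] @ [y, x] @ []) \<in> pres_eq V W_rel"
      using True by (intro pe_rel) (auto simp: racg_rel_def)
    then show ?thesis using True by (simp add: pres_class_eq_iff)
  next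
    case 3
    then have "([] @ [y, x] @ [], [] @ [x, y] @ []) \<in> pres_eq V W_rel"
      using True by (intro pe_rel) (auto simp: racg_rel_def)
    then show ?thesis using True by (simp add: pres_class_eq_iff pe_sym)
  qed simp
  then show ?thesis using True by (simp add: W_mult)
next
  case False
  then have "W_class [x] = {} \<or> W_class [y] = {}"
    using pres_eq_lists[of "[x]" _ V W_rel] pres_eq_lists[of "[y]" _ V W_rel]
    by (auto simp: pres_class_def)
  then show ?thesis by (auto simp: W_eq pres_group_def)
qed

abbreviation "L_eq \<equiv> pres_eq I L_rels"

lemma commute_W_twisted_pair:
  assumes "i \<in> I" "j \<in> I" "h \<in> Gs" "commute_W (h i) (h (g i j))"
  shows "commute_W i j"
proof -
  interpret W: group W by (rule group_W)
  have ic: "i \<in> carrier W" "j \<in> carrier W" "g i j \<in> carrier W"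
    using assms(1,2) by (auto simp: I_subset_W Gs_apply_carrier g_in_Gs)
  have "h (i \<otimes>\<^bsub>W\<^esub> g i j) = h (g i j \<otimes>\<^bsub>W\<^esub> i)" using assms(3,4) ic by (simp add: Gs_mult)
  then have "commute_W i (g i j)" using Gs_apply_inj[OF assms(3)] ic by simp
  from commute_g_apply[OF assms(1) ic(3) this] show ?thesis using assms(1) ic by (simp add: g_apply_g)
qed

lemma lift_swap_pair:
  assumes ij: "i \<in> I" "j \<in> I" and h: "h \<in> Gs" and c: "commute_W (h i) (h (g i j))"
  shows "\<exists>i' j'. i' \<in> I \<and> j' \<in> I \<and> ([i, j], [i', j']) \<in> L_eq \<and>
           twisted_word h [i', j'] = [h (g i j), h i] \<and> twist h [i', j'] = twist h [i, j]"
  using g_exchange[OF ij commute_W_twisted_pair[OF ij h c]]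
proof (elim disjE conjE)
  let ?k = "g i j"
  assume k: "?k \<in> I" and gji: "g j i = i" and gk: "g ?k = g i \<otimes>\<^bsub>GG\<^esub> g j \<otimes>\<^bsub>GG\<^esub> g i"
  have "([] @ [i, j] @ [], [] @ [?k, i] @ []) \<in> L_eq"
    using ij k commute_W_twisted_pair[OF ij h c] gji gk by (intro pe_rel) (auto simp: L_rel_def)
  moreover have "twisted_word h [?k, i] = [h ?k, h i]"
    using h ij k by (simp add: GG_apply_mult I_subset_W gk g_fixes gji)
  moreover have "twist h [?k, i] = twist h [i, j]"
    using h ij k
    by (auto intro!: Gs_eqI simp: Gs_mult_closed g_in_Gs GG_apply_mult Gs_apply_carrier gk g_apply_g)
  ultimately show ?thesis using ij k by auto
next
  let ?k = "g j i"
  assume k: "?k \<in> I" and gij: "g i j = j" and gk: "g ?k = g j \<otimes>\<^bsub>GG\<^esub> g i \<otimes>\<^bsub>GG\<^esub> g j"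
  have "([j, i], [?k, j]) \<in> L_rels"
    using ij k commute_W_twisted_pair[OF ij h c] gij gk by (auto simp: L_rel_def)
  then have "([j] @ [j, i] @ [j], [j] @ [?k, j] @ [j]) \<in> L_eq"
    using ij k by (intro pe_rel) auto
  then have "([i, j], [j, ?k]) \<in> L_eq"
    using pe_inv[of "[]" I "[i, j]" j L_rels] pe_inv[of "[j, ?k]" I "[]" j L_rels] ij k
    by (auto intro: pe_trans pe_sym)
  moreover have "twisted_word h [j, ?k] = [h (g i j), h i]"
    using h ij k by (simp add: GG_apply_mult I_subset_W g_apply_g gij)
  moreover have "twist h [j, ?k] = twist h [i, j]"
    using h ij k
    by (auto intro!: Gs_eqI simp: Gs_mult_closed g_in_Gs GG_apply_mult Gs_apply_carrier gk g_apply_g)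
  ultimately show ?thesis using ij k by blast
qed

lemma lift_twisted_word_step:
  assumes w: "w \<in> lists I" and h: "h \<in> Gs" and e: "twisted_word h w = u @ \<tau>"
    and head: "\<And>h w. h \<in> Gs \<Longrightarrow> w \<in> lists I \<Longrightarrow> twisted_word h w = \<tau> \<Longrightarrow>
       \<exists>w'\<in>lists I. (w, w') \<in> L_eq \<and> twisted_word h w' = \<tau>'"
  shows "\<exists>w'\<in>lists I. (w, w') \<in> L_eq \<and> twisted_word h w' = u @ \<tau>'"
proof -
  define w1 where "w1 = take (length u) w"
  define w2 where "w2 = drop (length u) w"
  have ww: "w = w1 @ w2" and l: "length (twisted_word h w1) = length u"
    using arg_cong[OF e, of length] by (simp_all add: w1_def w2_def)
  then have "twisted_word h w1 = u" "twisted_word (twist h w1) w2 = \<tau>"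
    using e by (simp_all add: twisted_word_append)
  moreover have w12: "w1 \<in> lists I" "w2 \<in> lists I" using w ww by auto
  ultimately obtain w2' where "w2' \<in> lists I" "(w2, w2') \<in> L_eq" "twisted_word (twist h w1) w2' = \<tau>'"
    using head[OF twist_in_Gs[OF h]] by blast
  moreover have "(w, w1 @ w2') \<in> L_eq"
    using pres_eq_append_cong[OF \<open>(w2, w2') \<in> L_eq\<close> w12(1), of "[]"] ww by simp
  ultimately show ?thesis
    using w12 \<open>twisted_word h w1 = u\<close> by (auto simp: twisted_word_append intro!: bexI[of _ "w1 @ w2'"])
qed

lemma lift_comm_swap_head:
  assumes w: "w \<in> lists I" and h: "h \<in> Gs" and e: "twisted_word h w = s # t # v" and c: "commute_W s t"
  shows "\<exists>w'\<in>lists I. (w, w') \<in> L_eq \<and> twisted_word h w' = t # s # v"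
proof -
  obtain i j w3 where ww: "w = i # j # w3" using e by (cases w; cases "tl w") auto
  then have ij: "i \<in> I" "j \<in> I" "w3 \<in> lists I" using w by auto
  have st: "s = h i" "t = h (g i j)" using e ww ij h by (auto simp: GG_apply_mult I_subset_W)
  have v: "v = twisted_word (twist h [i, j]) w3"
    using e ww twisted_word_append[of h "[i, j]" w3] by simp
  from lift_swap_pair[OF ij(1,2) h] c st obtain i' j' where
    i'j': "i' \<in> I" "j' \<in> I" "([i, j], [i', j']) \<in> L_eq" "twisted_word h [i', j'] = [t, s]"
      "twist h [i', j'] = twist h [i, j]"
    by blast
  have "(w, i' # j' # w3) \<in> L_eq" using pres_eq_append_cong[OF i'j'(3), of "[]" w3] ww ij by simp
  moreover have "twisted_word h (i' # j' # w3) = t # s # v"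
    using twisted_word_append[of h "[i', j']" w3] i'j' v by simp
  moreover have "i' # j' # w3 \<in> lists I" using i'j' ij by simp
  ultimately show ?thesis by blast
qed

lemma lift_comm_cancel_head:
  assumes "w \<in> lists I" "h \<in> Gs" "twisted_word h w = a # m @ a # v" "\<forall>c\<in>set m. commute_W a c"
  shows "\<exists>w'\<in>lists I. (w, w') \<in> L_eq \<and> twisted_word h w' = m @ v"
  using assms
proof (induction m arbitrary: h w)
  case Nil
  obtain i j w3 where ww: "w = i # j # w3" using Nil.prems(3) by (cases w; cases "tl w") auto
  then have ij: "i \<in> I" "j \<in> I" "w3 \<in> lists I" using Nil.prems by auto
  have "h i = h (g i j)" using Nil.prems(2,3) ww ij by (auto simp: GG_apply_mult I_subset_W)
  then have "i = g i j" using Gs_apply_inj[OF Nil.prems(2)] ij by (simp add: I_subset_W Gs_apply_carrier g_in_Gs)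
  then have ji: "j = i" using g_apply_g[OF ij(1) I_subset_W[OF ij(2)]] by (simp add: g_fixes ij)
  have "(h \<otimes>\<^bsub>GG\<^esub> g i) \<otimes>\<^bsub>GG\<^esub> g i = h"
    using Nil.prems(2) ij by (auto intro!: Gs_eqI simp: Gs_mult_closed g_in_Gs GG_apply_mult Gs_apply_carrier g_apply_g)
  then have "twisted_word h w3 = v" using Nil.prems(3) ww ji by simp
  moreover have "(w, w3) \<in> L_eq" using pe_inv[of "[]" I w3 i L_rels] ww ji ij by simp
  ultimately show ?case using ij by auto
next
  case (Cons c m')
  have "twisted_word h w = a # c # (m' @ a # v)" using Cons.prems(3) by simp
  from lift_comm_swap_head[OF Cons.prems(1,2) this] Cons.prems(4) obtain w'' where
    w'': "w'' \<in> lists I" "(w, w'') \<in> L_eq" "twisted_word h w'' = c # a # m' @ a # v" by auto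
  obtain i w3 where ww: "w'' = i # w3" using w''(3) by (cases w'') auto
  then have i: "i \<in> I" "w3 \<in> lists I" using w'' by auto
  have e3: "twisted_word (h \<otimes>\<^bsub>GG\<^esub> g i) w3 = a # m' @ a # v" and hi: "h i = c" using w''(3) ww by auto
  from Cons.IH[OF i(2) Gs_mult_closed[OF Cons.prems(2) g_in_Gs[OF i(1)]] e3] Cons.prems(4) obtain w4 where
    w4: "w4 \<in> lists I" "(w3, w4) \<in> L_eq" "twisted_word (h \<otimes>\<^bsub>GG\<^esub> g i) w4 = m' @ v" by auto
  have "(w, i # w4) \<in> L_eq"
    using pe_trans[OF w''(2)] pres_eq_append_cong[OF w4(2), of "[i]" "[]"] ww i by simp
  moreover have "twisted_word h (i # w4) = (c # m') @ v" using w4 hi by simp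
  moreover have "i # w4 \<in> lists I" using w4 i by simp
  ultimately show ?case by blast
qed

lemma lift_comm_trivial:
  assumes "comm_trivial commute_W \<tau>"
  shows "h \<in> Gs \<Longrightarrow> w \<in> lists I \<Longrightarrow> twisted_word h w = \<tau> \<Longrightarrow> (w, []) \<in> L_eq"
  using assms[unfolded comm_trivial_def]
proof (induction arbitrary: h w rule: converse_rtranclp_induct)
  case base
  then show ?case using length_twisted_word[of h w] by (auto intro: pe_refl)
next
  case (step \<tau> \<tau>1)
  have "\<exists>w'\<in>lists I. (w, w') \<in> L_eq \<and> twisted_word h w' = \<tau>1"
    using step.hyps(1) unfolding comm_step_def
  proof (elim disjE)
    assume "comm_swap commute_W \<tau> \<tau>1"
    then show ?thesis
    proof cases
      case (comm_swapI s t u v)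
      then show ?thesis
        using lift_twisted_word_step[OF step.prems(2,1), of u "s # t # v" "t # s # v"]
          lift_comm_swap_head step.prems(3) by auto
    qed
  next
    assume "comm_cancel commute_W \<tau> \<tau>1"
    then show ?thesis
    proof cases
      case (comm_cancelI m a u v)
      then show ?thesis
        using lift_twisted_word_step[OF step.prems(2,1), of u "a # m @ a # v" "m @ v"]
          lift_comm_cancel_head step.prems(3) by auto
    qed
  qed
  then obtain w' where "w' \<in> lists I" "(w, w') \<in> L_eq" "twisted_word h w' = \<tau>1" by blast
  with step.IH[OF step.prems(1)] show ?case by (auto intro: pe_trans)
qed

lemma gen_prod_eq_one_imp_pres_eq:
  assumes w: "w \<in> lists I" and one: "gen_prod w = \<one>\<^bsub>SD\<^esub>"
  shows "(w, []) \<in> L_eq"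
proof -
  define \<sigma> where "\<sigma> = twisted_word \<one>\<^bsub>GG\<^esub> w"
  have \<sigma>_S: "set \<sigma> \<subseteq> S" using twisted_word_in_S[OF one_GG_in_Gs w] by (simp add: \<sigma>_def)
  have "W_prod \<sigma> = \<one>\<^bsub>GG\<^esub> \<one>\<^bsub>W\<^esub>"
    using apply_fst_gen_prod[OF one_GG_in_Gs w] one by (simp add: \<sigma>_def SD_one)
  then have "W_class (map letter \<sigma>) = W_class []"
    using W_prod_S[OF \<sigma>_S] monoid.one_closed[OF group.is_monoid[OF group_W]]
    by (simp add: GG_apply_one W_one)
  then have "(map letter \<sigma>, []) \<in> pres_eq V W_rel"
    using W_prod_S[OF \<sigma>_S] by (simp add: pres_class_eq_iff)
  then have "comm_trivial (racg_commuting E) (map letter \<sigma>)"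
    using pres_eq_racg_comm_trivial_iff by (auto simp: comm_trivial_def)
  then have "comm_trivial commute_W (map (\<lambda>x. W_class [x]) (map letter \<sigma>))"
    using comm_trivial_map[of "racg_commuting E" commute_W "\<lambda>x. W_class [x]"] racg_commuting_commute_W
    by blast
  moreover have "map (\<lambda>x. W_class [x]) (map letter \<sigma>) = \<sigma>"
    using \<sigma>_S S_letter by (induction \<sigma>) auto
  ultimately show ?thesis using lift_comm_trivial one_GG_in_Gs w by (simp add: \<sigma>_def)
qed

abbreviation "gens \<equiv> {(i, g i) | i. i \<in> I}"

lemma gen_prod_in_generate: "w \<in> lists I \<Longrightarrow> gen_prod w \<in> generate SD gens"
proof (induction w)
  case (Cons i w)
  then have "(i, g i) \<in> generate SD gens" by (auto intro: generate.incl)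
  with Cons show ?case by (auto simp: gen_prod_Cons intro: generate.eng)
qed (simp add: generate.one)

lemma generate_gens_eq: "generate SD gens = gen_prod ` lists I"
proof (rule equalityI)
  show "generate SD gens \<subseteq> gen_prod ` lists I"
  proof
    fix z assume "z \<in> generate SD gens"
    then show "z \<in> gen_prod ` lists I"
    proof (induction rule: generate.induct)
      case one
      have "\<one>\<^bsub>SD\<^esub> = gen_prod []" by simp
      then show ?case by blast
    next
      case (incl h)
      then obtain i where "i \<in> I" "h = gen_prod [i]" by (auto simp: gen_prod_single)
      then show ?case by (intro image_eqI) auto
    next
      case (inv h)
      then obtain i where i: "i \<in> I" "h = (i, g i)" by auto
      then have "inv\<^bsub>SD\<^esub> h = gen_prod [i]"
        using monoid.inv_unique'[OF monoid_SD gen_carrier gen_carrier gen_square gen_square]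
        by (simp add: gen_prod_single)
      then show ?case using i by (intro image_eqI) auto
    next
      case (eng h1 h2)
      then obtain u v where "u \<in> lists I" "v \<in> lists I" "h1 = gen_prod u" "h2 = gen_prod v" by blast
      then have "h1 \<otimes>\<^bsub>SD\<^esub> h2 = gen_prod (u @ v)" "u @ v \<in> lists I"
        by (simp_all add: gen_prod_append)
      then show ?case by blast
    qed
  qed
next
  show "gen_prod ` lists I \<subseteq> generate SD gens"
    using gen_prod_in_generate by blast
qed

lemma pres_lift_gen_prod_iso: "pres_lift gen_prod \<in> iso (pres_group I L_rels) (H_grp W GG I g)"
proof -
  have carrier_H: "carrier (H_grp W GG I g) = gen_prod ` lists I"
    by (simp add: H_grp_def generate_gens_eq)
  have "pres_lift gen_prod \<in> hom (pres_group I L_rels) (H_grp W GG I g)"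
    by (rule pres_lift_hom) (auto simp: gen_prod_pres_eq gen_prod_in_generate H_grp_def gen_prod_append)
  moreover have "inj_on (pres_lift gen_prod) (carrier (pres_group I L_rels))"
    by (rule pres_lift_inj_on[where M = SD])
      (auto simp: gen_prod_pres_eq gen_prod_append gen_prod_eq_one_imp_pres_eq)
  moreover have "pres_lift gen_prod ` carrier (pres_group I L_rels) = carrier (H_grp W GG I g)"
    by (simp add: pres_lift_image gen_prod_pres_eq carrier_H)
  ultimately show ?thesis by (simp add: iso_def bij_betw_def)
qed

lemma pres_lift_gen_prod_gen: "i \<in> I \<Longrightarrow> pres_lift gen_prod (pres_gen I L_rels i) = (i, g i)"
  by (simp add: pres_gen_def pres_class_def[symmetric] pres_lift_class gen_prod_pres_eq gen_prod_single)

end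

theorem lemma1:
  fixes V :: "'v set" and E :: "'v \<Rightarrow> 'v \<Rightarrow> bool"
    and Gs :: "('v list set \<Rightarrow> 'v list set) set"
    and I :: "'v list set set"
    and g :: "'v list set \<Rightarrow> ('v list set \<Rightarrow> 'v list set)"
  defines "W \<equiv> racg V E"
    and "S \<equiv> racg_S V E"
    and "GG \<equiv> (AutS (racg V E) (racg_S V E))\<lparr>carrier := Gs\<rparr>"
  assumes G_sub: "subgroup Gs (AutS W S)"
    and I_sub: "I \<subseteq> S"
    and g_in: "\<forall>i\<in>I. g i \<in> Gs"
    and g_invol: "\<forall>i\<in>I. g i \<otimes>\<^bsub>GG\<^esub> g i = \<one>\<^bsub>GG\<^esub> \<and> g i \<noteq> \<one>\<^bsub>GG\<^esub>"
    and cond_i: "\<forall>i\<in>I. \<forall>s\<in>S. g i s \<in> S"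
    and cond_ii: "\<forall>i\<in>I. \<forall>j\<in>I. i \<otimes>\<^bsub>W\<^esub> j = j \<otimes>\<^bsub>W\<^esub> i \<longrightarrow>
        (g i j \<in> I \<and> g j i = i \<and> g (g i j) = g i \<otimes>\<^bsub>GG\<^esub> g j \<otimes>\<^bsub>GG\<^esub> g i) \<or>
        (g j i \<in> I \<and> g i j = j \<and> g (g j i) = g j \<otimes>\<^bsub>GG\<^esub> g i \<otimes>\<^bsub>GG\<^esub> g j)"
    and cond_iii: "\<forall>i\<in>I. g i i = i"
  shows "\<exists>\<phi>. \<phi> \<in> iso (pres_group I (L_rel W GG I g)) (H_grp W GG I g) \<and>
           (\<forall>i\<in>I. \<phi> (pres_gen I (L_rel W GG I g) i) = (i, g i))"
proof -
  have "twisted_racg V E Gs I g W S GG"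
    unfolding twisted_racg_def using G_sub I_sub g_in g_invol cond_ii cond_iii
    by (simp add: W_def S_def GG_def)
  then interpret twisted_racg V E Gs I g W S GG .
  show ?thesis using pres_lift_gen_prod_iso pres_lift_gen_prod_gen by blast
qed

end
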